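(* Let $\phi$ be the $2$-spin structure on the closed torus $\Sigma_1$ with $\phi(\alpha)=1$ and $\phi(\beta)=0$, where $\alpha,\beta$ are simple closed curves with $|\alpha\cap\beta|=1$. Set $a=t_\alpha$ and $b=t_\beta$. Then $\operatorname{Mod}(\Sigma_1)[\phi]$ is generated by $a^2$ and $b$, and has the presentation $\langle a^2,b\mid (a^2b)^2=(ba^2)^2,\ (a^2b)^4=1\rangle$.
   Context: A $2$-spin structure on a surface is a map $\phi$ from isotopy classes of oriented simple closed curves to $\mathbb{Z}/2$ with $\phi(t_c(d))=\phi(d)+(d\cdot c)\phi(c)$ ($t_c$ Dehn twist, $d\cdot c$ algebraic intersection) and $\sum\phi(c_i)=\chi(S)\bmod 2$ whenever $c_1,\dots,c_m$ is the oriented boundary of a subsurface $S$; it is determined by its values on a homology basis. $\operatorname{Mod}(\Sigma_1)$ acts by $(f\cdot\phi)(c)=\phi(f^{-1}(c))$ and $\operatorname{Mod}(\Sigma_1)[\phi]$ is the stabilizer of $\phi$. The claimed presentation means that the abstract group with generators $x,y$ and relations $(xy)^2=(yx)^2$, $(xy)^4=1$ is isomorphic to $\operatorname{Mod}(\Sigma_1)[\phi]$ via $x\mapsto t_\alpha^2$, $y\mapsto t_\beta$. *)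

theory Defs
  imports "HOL-Algebra.Generated_Groups"
begin

text \<open>Model: Mod(Sigma_1) = SL(2,Z) acting on H_1(Sigma_1;Z) = Z^2 with basis
  alpha = (1,0), beta = (0,1). A matrix (a,b,c,d) stands for [[a,b],[c,d]],
  acting on column vectors. Isotopy classes of oriented essential simple closed
  curves correspond to primitive vectors of Z^2.\<close>

type_synonym mat2 = "int \<times> int \<times> int \<times> int"
type_synonym vec2 = "int \<times> int"

definition mmul :: "mat2 \<Rightarrow> mat2 \<Rightarrow> mat2" where
  "mmul m n = (case m of (a,b,c,d) \<Rightarrow> case n of (e,f,g,h) \<Rightarrow>
     (a*e + b*g, a*f + b*h, c*e + d*g, c*f + d*h))"

definition mdet :: "mat2 \<Rightarrow> int" where
  "mdet m = (case m of (a,b,c,d) \<Rightarrow> a*d - b*c)"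

definition minv :: "mat2 \<Rightarrow> mat2" where
  "minv m = (case m of (a,b,c,d) \<Rightarrow> (d, -b, -c, a))"

definition mapply :: "mat2 \<Rightarrow> vec2 \<Rightarrow> vec2" where
  "mapply m v = (case m of (a,b,c,d) \<Rightarrow> case v of (x,y) \<Rightarrow> (a*x + b*y, c*x + d*y))"

definition SL2Z :: "mat2 monoid" where
  "SL2Z = \<lparr>carrier = {m. mdet m = 1}, mult = mmul, one = (1,0,0,1)\<rparr>"

text \<open>Algebraic intersection number on H_1 of the torus, alpha . beta = 1.\<close>
definition ipair :: "vec2 \<Rightarrow> vec2 \<Rightarrow> int" where
  "ipair u v = fst u * snd v - snd u * fst v"

definition primitive :: "vec2 \<Rightarrow> bool" where
  "primitive v = (gcd (fst v) (snd v) = 1)"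

definition twist_vec :: "vec2 \<Rightarrow> vec2 \<Rightarrow> vec2" where
  "twist_vec c d = (fst d + ipair c d * fst c, snd d + ipair c d * snd c)"

definition dehn :: "vec2 \<Rightarrow> mat2" where
  "dehn c = (case c of (p,q) \<Rightarrow> (1 - p*q, p*p, - q*q, 1 + p*q))"

definition t_alpha :: mat2 where "t_alpha = dehn (1,0)"
definition t_beta :: mat2 where "t_beta = dehn (0,1)"

text \<open>2-spin structures on the torus, with values in Z/2 represented by {0,1}.
  The twist formula for all curves c, d; the subsurface (Euler characteristic)
  condition: essential disjoint curves on the torus are parallel, so the only
  subsurfaces bounded by essential curves are annuli bounded by c and its reverse,
  giving phi(c) + phi(-c) = 0 mod 2.\<close>
definition spin2 :: "(vec2 \<Rightarrow> int) \<Rightarrow> bool" where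
  "spin2 \<phi> \<longleftrightarrow>
     (\<forall>c. primitive c \<longrightarrow> \<phi> c \<in> {0,1}) \<and>
     (\<forall>c d. primitive c \<longrightarrow> primitive d \<longrightarrow>
        \<phi> (twist_vec c d) mod 2 = (\<phi> d + ipair d c * \<phi> c) mod 2) \<and>
     (\<forall>c. primitive c \<longrightarrow> (\<phi> c + \<phi> (- fst c, - snd c)) mod 2 = 0)"

definition spin_stab :: "(vec2 \<Rightarrow> int) \<Rightarrow> mat2 set" where
  "spin_stab \<phi> = {f \<in> carrier SL2Z. \<forall>c. primitive c \<longrightarrow> \<phi> (mapply (minv f) c) = \<phi> c}"

definition StabGroup :: "(vec2 \<Rightarrow> int) \<Rightarrow> mat2 monoid" where
  "StabGroup \<phi> = SL2Z\<lparr>carrier := spin_stab \<phi>\<rparr>"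

end

theory Submission
  imports Defs
begin

text \<open>The twist formula forces \<open>\<phi>(p, q) \<equiv> p (mod 2)\<close> on primitive vectors, so the stabiliser
  of \<open>\<phi>\<close> is \<open>\<Gamma>\<^sup>0(2) = {[[a, b], [c, d]] \<in> SL(2, \<int>) : b even}\<close>. Put \<open>x = t\<^sub>\<alpha>\<^sup>2 = [[1, 2], [0, 1]]\<close>,
  \<open>y = t\<^sub>\<beta>\<close> and \<open>z = xy = [[-1, 2], [-1, 1]]\<close>. In any group satisfying the two relations,
  \<open>w = z\<^sup>2\<close> is central with \<open>w\<^sup>2 = 1\<close>, so every element of \<open>\<langle>x, y\<rangle>\<close> can be written as
  \<open>w\<^sup>s x\<^bsup>n\<^sub>0\<^esup> z x\<^bsup>n\<^sub>1\<^esup> z \<cdots> z x\<^bsup>n\<^sub>k\<^esup>\<close> with \<open>n\<^sub>1, \<dots>, n\<^sub>k\<^sub>-\<^sub>1 \<noteq> 0\<close>, and normal forms are multiplied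
  by a rule that uses nothing but the relations. In \<open>SL(2, \<int>)\<close> a Euclidean descent on the lower
  left entry shows that every element of \<open>\<Gamma>\<^sup>0(2)\<close> has a normal form, and a ping-pong argument on
  the slope of the first column shows that it is unique. Hence evaluating normal forms in another
  group satisfying the relations is a well-defined homomorphism out of \<open>\<Gamma>\<^sup>0(2)\<close>, and it is the
  only one with the prescribed values on the generators.\<close>

lemma mmul_assoc: "mmul (mmul a b) c = mmul a (mmul b c)"
  by (cases a; cases b; cases c) (simp add: mmul_def algebra_simps)

lemma mdet_mmul: "mdet (mmul a b) = mdet a * mdet b"
  by (cases a; cases b) (simp add: mmul_def mdet_def algebra_simps)

lemma mmul_one [simp]: "mmul (1,0,0,1) a = a" "mmul a (1,0,0,1) = a"
  by (cases a; simp add: mmul_def)+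

lemma minv_mmul: "mdet a = 1 \<Longrightarrow> mmul (minv a) a = (1,0,0,1)"
  by (cases a) (simp add: mmul_def minv_def mdet_def algebra_simps)

lemma mdet_minv: "mdet (minv a) = mdet a"
  by (cases a) (simp add: minv_def mdet_def algebra_simps)

lemma SL2Z_simps [simp]:
  "carrier SL2Z = {m. mdet m = 1}" "mult SL2Z = mmul" "one SL2Z = (1,0,0,1)"
  by (simp_all add: SL2Z_def)

lemma group_SL2Z: "group SL2Z"
proof (rule monoid.group_l_invI)
  show "monoid SL2Z"
    by (rule monoidI) (auto simp: mdet_mmul mmul_assoc, simp add: mdet_def)
  show "\<exists>y\<in>carrier SL2Z. y \<otimes>\<^bsub>SL2Z\<^esub> x = \<one>\<^bsub>SL2Z\<^esub>" if "x \<in> carrier SL2Z" for x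
    using that by (intro bexI[of _ "minv x"]) (auto simp: minv_mmul mdet_minv)
qed

lemma inv_SL2Z: "mdet a = 1 \<Longrightarrow> inv\<^bsub>SL2Z\<^esub> a = minv a"
  using group.inv_equality[OF group_SL2Z, of "minv a" a]
  by (simp add: minv_mmul mdet_minv)

lemma (in group) commutes_int_pow:
  assumes xy: "x \<otimes> y = y \<otimes> x" and x: "x \<in> carrier G" and y: "y \<in> carrier G"
  shows "x \<otimes> y [^] (n::int) = y [^] n \<otimes> x"
proof -
  have nat: "x \<otimes> y [^] k = y [^] k \<otimes> x" for k :: nat
    using group_commutes_pow[OF xy[symmetric] y x, of k] by (rule sym)
  show ?thesis
  proof (cases "n < 0")
    case True
    define u where "u = y [^] nat (- n)"
    have u: "u \<in> carrier G" "x \<otimes> u = u \<otimes> x" using nat y by (simp_all add: u_def)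
    have "u \<otimes> (x \<otimes> inv u) = (x \<otimes> u) \<otimes> inv u"
      using u x by (simp add: m_assoc)
    also have "\<dots> = x"
      using u(1) x by (simp add: m_assoc)
    finally have "x = u \<otimes> (x \<otimes> inv u)" by (rule sym)
    moreover have "x \<otimes> inv u = inv u \<otimes> x \<longleftrightarrow> x = u \<otimes> (x \<otimes> inv u)"
      using u(1) x by (intro inv_solve_left) simp_all
    ultimately have "x \<otimes> inv u = inv u \<otimes> x" by blast
    moreover have "y [^] n = inv u"
      using True int_pow_neg_int[OF y, of "nat (- n)"] by (simp add: u_def)
    ultimately show ?thesis by simp
  next
    case False
    then show ?thesis using nat[of "nat n"] by simp
  qed
qed

lemma hom_eq_on_generate:
  assumes "group G" "group H" "f \<in> hom G H" "g \<in> hom G H"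
    and "S \<subseteq> carrier G" "\<And>s. s \<in> S \<Longrightarrow> f s = g s" "x \<in> generate G S"
  shows "f x = g x"
proof -
  interpret f: group_hom G H f using assms(1-3) by (simp add: group_hom_def group_hom_axioms_def)
  interpret g: group_hom G H g using assms(1,2,4) by (simp add: group_hom_def group_hom_axioms_def)
  show ?thesis
    using assms(7)
  proof induction
    case (inv h)
    then show ?case using assms(5,6) by auto
  next
    case (eng h1 h2)
    then have "h1 \<in> carrier G" "h2 \<in> carrier G"
      using group.generate_in_carrier[OF assms(1,5)] by blast+
    then show ?case using eng by simp
  qed (simp_all add: assms(6))
qed

section \<open>Normal forms for the relations\<close>

type_synonym nform = "bool \<times> int list"

fun word_eval :: "('a, 'm) monoid_scheme \<Rightarrow> 'a \<Rightarrow> 'a \<Rightarrow> int list \<Rightarrow> 'a" where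
  "word_eval G a b [] = \<one>\<^bsub>G\<^esub>"
| "word_eval G a b [n] = a [^]\<^bsub>G\<^esub> n"
| "word_eval G a b (n # m # ns) =
     a [^]\<^bsub>G\<^esub> n \<otimes>\<^bsub>G\<^esub> (a \<otimes>\<^bsub>G\<^esub> b) \<otimes>\<^bsub>G\<^esub> word_eval G a b (m # ns)"

text \<open>The normal form \<open>(s, [n\<^sub>0, \<dots>, n\<^sub>k])\<close> stands for
  \<open>w\<^sup>s a\<^bsup>n\<^sub>0\<^esup> z a\<^bsup>n\<^sub>1\<^esup> z \<cdots> z a\<^bsup>n\<^sub>k\<^esup>\<close> with \<open>z = ab\<close> and \<open>w = z\<^sup>2\<close>.\<close>

definition nform_eval :: "('a, 'm) monoid_scheme \<Rightarrow> 'a \<Rightarrow> 'a \<Rightarrow> nform \<Rightarrow> 'a" where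
  "nform_eval G a b P =
     (if fst P then (a \<otimes>\<^bsub>G\<^esub> b) \<otimes>\<^bsub>G\<^esub> (a \<otimes>\<^bsub>G\<^esub> b) else \<one>\<^bsub>G\<^esub>) \<otimes>\<^bsub>G\<^esub> word_eval G a b (snd P)"

fun reduced :: "int list \<Rightarrow> bool" where
  "reduced [] = False"
| "reduced [n] = True"
| "reduced (n # m # ns) = ((ns \<noteq> [] \<longrightarrow> m \<noteq> 0) \<and> reduced (m # ns))"

definition normal_forms :: "nform set" where
  "normal_forms = {P. reduced (snd P)}"

definition nf_times_a :: "int \<Rightarrow> nform \<Rightarrow> nform" where
  "nf_times_a k P = (fst P, butlast (snd P) @ [last (snd P) + k])"

text \<open>Multiplying \<open>\<cdots> z a\<^sup>0\<close> by \<open>z\<close> produces \<open>z\<^sup>2 = w\<close>, which is central and is absorbed into the sign.\<close>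

definition nf_times_z :: "nform \<Rightarrow> nform" where
  "nf_times_z P =
     (if length (snd P) \<ge> 2 \<and> last (snd P) = 0 then (\<not> fst P, butlast (snd P))
      else (fst P, snd P @ [0]))"

fun nf_times_word :: "nform \<Rightarrow> int list \<Rightarrow> nform" where
  "nf_times_word P [] = P"
| "nf_times_word P [m] = nf_times_a m P"
| "nf_times_word P (m # m' # ms) = nf_times_word (nf_times_z (nf_times_a m P)) (m' # ms)"

definition nf_times :: "nform \<Rightarrow> nform \<Rightarrow> nform" where
  "nf_times P Q = nf_times_word (if fst Q then (\<not> fst P, snd P) else P) (snd Q)"

lemma reduced_snoc:
  "ns \<noteq> [] \<Longrightarrow> reduced (ns @ [m]) \<longleftrightarrow> reduced ns \<and> (length ns \<ge> 2 \<longrightarrow> last ns \<noteq> 0)"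
proof (induction ns rule: reduced.induct)
  case (3 n m' ns)
  then show ?case by (cases ns) auto
qed auto

lemma reduced_nf_times_a: "reduced (snd P) \<Longrightarrow> reduced (snd (nf_times_a k P))"
proof -
  assume red: "reduced (snd P)"
  then obtain ns l where P: "snd P = ns @ [l]" by (metis reduced.simps(1) rev_exhaust)
  show ?thesis
  proof (cases "ns = []")
    case False
    then show ?thesis using P red reduced_snoc[OF False] by (simp add: nf_times_a_def)
  qed (use P in \<open>simp add: nf_times_a_def\<close>)
qed

lemma reduced_nf_times_z: "reduced (snd P) \<Longrightarrow> reduced (snd (nf_times_z P))"
proof -
  assume red: "reduced (snd P)"
  then obtain ns l where P: "snd P = ns @ [l]" by (metis reduced.simps(1) rev_exhaust)
  show ?thesis
  proof (cases "ns = []")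
    case False
    then show ?thesis using P red reduced_snoc[OF False] reduced_snoc[of "ns @ [l]" 0]
      by (auto simp add: nf_times_z_def)
  qed (use P in \<open>simp add: nf_times_z_def\<close>)
qed

lemma nf_times_closed: "P \<in> normal_forms \<Longrightarrow> nf_times P Q \<in> normal_forms"
proof -
  have "reduced (snd P) \<Longrightarrow> reduced (snd (nf_times_word P ms))" for P ms
    by (induction P ms rule: nf_times_word.induct) (auto simp: reduced_nf_times_a reduced_nf_times_z)
  then show "P \<in> normal_forms \<Longrightarrow> nf_times P Q \<in> normal_forms"
    by (simp add: normal_forms_def nf_times_def)
qed

locale spin_relations = group +
  fixes a b
  assumes a_closed [simp]: "a \<in> carrier G" and b_closed [simp]: "b \<in> carrier G"
    and relation_comm: "(a \<otimes> b) [^] (2::nat) = (b \<otimes> a) [^] (2::nat)"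
    and relation_order: "(a \<otimes> b) [^] (4::nat) = \<one>"
begin

definition "z = a \<otimes> b"
definition "w = z \<otimes> z"

lemma z_closed [simp]: "z \<in> carrier G" and w_closed [simp]: "w \<in> carrier G"
  by (auto simp: z_def w_def)

lemma word_eval_Cons_Cons [simp]:
  "word_eval G a b (n # m # ns) = a [^] n \<otimes> z \<otimes> word_eval G a b (m # ns)"
  by (simp add: z_def)

declare word_eval.simps(3) [simp del]

lemma nform_eval_eq: "nform_eval G a b P = (if fst P then w else \<one>) \<otimes> word_eval G a b (snd P)"
  by (simp add: nform_eval_def w_def z_def)

lemma w_square: "w \<otimes> w = \<one>"
proof -
  have "(a \<otimes> b) [^] (4::nat) = w \<otimes> w"
    by (simp add: numeral_eq_Suc m_assoc w_def z_def)
  then show ?thesis using relation_order by simp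
qed

lemma w_comm_a: "w \<otimes> a = a \<otimes> w"
proof -
  have "w = (b \<otimes> a) \<otimes> (b \<otimes> a)"
    using relation_comm by (simp add: numeral_eq_Suc w_def z_def)
  then have "a \<otimes> w = (a \<otimes> b) \<otimes> (a \<otimes> b) \<otimes> a"
    by (simp add: m_assoc)
  then show ?thesis by (simp add: w_def z_def)
qed

lemma w_comm_a_pow: "w \<otimes> a [^] (n::int) = a [^] n \<otimes> w"
  using commutes_int_pow[OF w_comm_a] by simp

lemma w_comm_z: "w \<otimes> z = z \<otimes> w"
  by (simp add: w_def m_assoc)

lemma word_eval_closed [simp]: "word_eval G a b ns \<in> carrier G"
  by (induction ns rule: reduced.induct) auto

lemma nform_eval_closed [simp]: "nform_eval G a b P \<in> carrier G"
  by (simp add: nform_eval_def)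

lemma w_comm_word_eval: "w \<otimes> word_eval G a b ns = word_eval G a b ns \<otimes> w"
proof (induction ns rule: reduced.induct)
  case (2 n)
  then show ?case using w_comm_a_pow by simp
next
  case (3 n m ns)
  have "w \<otimes> (a [^] n \<otimes> z \<otimes> word_eval G a b (m # ns)) =
        a [^] n \<otimes> (w \<otimes> z) \<otimes> word_eval G a b (m # ns)"
    by (simp add: m_assoc[symmetric] w_comm_a_pow)
  also have "\<dots> = a [^] n \<otimes> z \<otimes> (w \<otimes> word_eval G a b (m # ns))"
    by (simp add: m_assoc w_comm_z)
  also have "\<dots> = (a [^] n \<otimes> z \<otimes> word_eval G a b (m # ns)) \<otimes> w"
    using 3 by (simp add: m_assoc)
  finally show ?case by simp
qed simp

lemma word_eval_snoc:
  "ns \<noteq> [] \<Longrightarrow> word_eval G a b (ns @ [m]) = word_eval G a b ns \<otimes> z \<otimes> a [^] m"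
proof (induction ns)
  case (Cons n ns)
  then show ?case by (cases ns) (auto simp: m_assoc)
qed simp

lemma nform_eval_times_a:
  assumes "snd P \<noteq> []"
  shows "nform_eval G a b (nf_times_a k P) = nform_eval G a b P \<otimes> a [^] k"
proof -
  obtain ns l where P: "snd P = ns @ [l]" using assms by (metis rev_exhaust)
  have "word_eval G a b (ns @ [l + k]) = word_eval G a b (ns @ [l]) \<otimes> a [^] k"
    by (cases "ns = []") (simp_all add: word_eval_snoc int_pow_mult m_assoc)
  then show ?thesis by (simp add: nform_eval_eq nf_times_a_def P m_assoc)
qed

lemma nform_eval_flip: "nform_eval G a b (\<not> fst P, snd P) = nform_eval G a b P \<otimes> w"
proof (cases "fst P")
  case True
  have "w \<otimes> word_eval G a b (snd P) \<otimes> w = word_eval G a b (snd P) \<otimes> (w \<otimes> w)"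
    by (simp add: w_comm_word_eval m_assoc)
  then show ?thesis using True by (simp add: nform_eval_eq w_square)
qed (simp add: nform_eval_eq w_comm_word_eval)

lemma nform_eval_times_z:
  assumes "snd P \<noteq> []"
  shows "nform_eval G a b (nf_times_z P) = nform_eval G a b P \<otimes> z"
proof -
  obtain ns l where P: "snd P = ns @ [l]" using assms by (metis rev_exhaust)
  show ?thesis
  proof (cases "length (snd P) \<ge> 2 \<and> l = 0")
    case True
    then have "ns \<noteq> []" using P by auto
    then have "nform_eval G a b P \<otimes> z = nform_eval G a b (fst P, ns) \<otimes> w"
      using True P by (simp add: nform_eval_eq word_eval_snoc m_assoc w_def)
    also have "\<dots> = nform_eval G a b (nf_times_z P)"
      using True P nform_eval_flip[of "(fst P, ns)"] by (simp add: nf_times_z_def)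
    finally show ?thesis by simp
  next
    case False
    have "word_eval G a b ((ns @ [l]) @ [0]) = word_eval G a b (ns @ [l]) \<otimes> z"
      using word_eval_snoc[of "ns @ [l]" 0] by simp
    then show ?thesis using False P by (auto simp add: nf_times_z_def nform_eval_eq m_assoc)
  qed
qed

lemma nform_eval_times_word:
  "snd P \<noteq> [] \<Longrightarrow>
     nform_eval G a b (nf_times_word P ms) = nform_eval G a b P \<otimes> word_eval G a b ms
     \<and> snd (nf_times_word P ms) \<noteq> []"
proof (induction P ms rule: nf_times_word.induct)
  case (2 P m)
  then show ?case using nform_eval_times_a[of P m] by (simp add: nf_times_a_def)
next
  case (3 P m m' ms)
  have ne: "snd (nf_times_a m P) \<noteq> []" by (simp add: nf_times_a_def)
  then have "snd (nf_times_z (nf_times_a m P)) \<noteq> []"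
    by (auto simp: nf_times_z_def dest: arg_cong[of _ _ length])
  moreover have "nform_eval G a b (nf_times_z (nf_times_a m P)) = nform_eval G a b P \<otimes> a [^] m \<otimes> z"
    using 3(2) ne by (simp add: nform_eval_times_z nform_eval_times_a)
  ultimately show ?case using 3(1) by (simp add: m_assoc)
qed simp

lemma nform_eval_times:
  assumes "P \<in> normal_forms"
  shows "nform_eval G a b (nf_times P Q) = nform_eval G a b P \<otimes> nform_eval G a b Q"
proof -
  have ne: "snd P \<noteq> []" using assms by (auto simp: normal_forms_def)
  show ?thesis
  proof (cases "fst Q")
    case True
    have "nform_eval G a b (nf_times P Q) =
          nform_eval G a b (\<not> fst P, snd P) \<otimes> word_eval G a b (snd Q)"
      using True ne nform_eval_times_word[of "(\<not> fst P, snd P)"] by (simp add: nf_times_def)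
    also have "\<dots> = nform_eval G a b P \<otimes> (w \<otimes> word_eval G a b (snd Q))"
      by (simp add: nform_eval_flip m_assoc)
    finally show ?thesis using True by (simp add: nform_eval_eq)
  next
    case False
    then show ?thesis using ne nform_eval_times_word[of P] by (simp add: nf_times_def nform_eval_eq)
  qed
qed

lemma nform_eval_Cons_Cons:
  "nform_eval G a b (s, n # m # ns) = a [^] n \<otimes> z \<otimes> nform_eval G a b (s, m # ns)"
proof (cases s)
  case True
  have "w \<otimes> (a [^] n \<otimes> z \<otimes> word_eval G a b (m # ns)) =
        a [^] n \<otimes> z \<otimes> (w \<otimes> word_eval G a b (m # ns))"
    by (simp add: m_assoc[symmetric] w_comm_a_pow) (simp add: m_assoc w_comm_z)
  then show ?thesis using True by (simp add: nform_eval_eq)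
qed (simp add: nform_eval_eq)

lemma nform_eval_in_generate: "nform_eval G a b P \<in> generate G {a, b}"
proof -
  have sub: "subgroup (generate G {a, b}) G" by (rule generate_is_subgroup) simp
  have gens: "a \<in> generate G {a, b}" "b \<in> generate G {a, b}" by (auto intro: generate.incl)
  then have "z \<in> generate G {a, b}" unfolding z_def using sub by (simp add: subgroup.m_closed)
  moreover have "word_eval G a b ns \<in> generate G {a, b}" for ns
    using \<open>z \<in> generate G {a, b}\<close> subgroup_int_pow_closed[OF sub gens(1)]
    by (induction ns rule: reduced.induct) (auto simp: sub subgroup.m_closed subgroup.one_closed)
  ultimately show ?thesis
    using sub by (simp add: nform_eval_eq w_def subgroup.m_closed subgroup.one_closed)
qed

end

section \<open>Ping-pong in \<open>SL(2, \<int>)\<close>\<close>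

definition mat_x :: mat2 where "mat_x = (1, 2, 0, 1)"
definition mat_y :: mat2 where "mat_y = (1, 0, -1, 1)"

lemma t_alpha_sq_eq: "mmul t_alpha t_alpha = mat_x"
  by (simp add: t_alpha_def dehn_def mmul_def mat_x_def)

lemma t_beta_eq: "t_beta = mat_y"
  by (simp add: t_beta_def dehn_def mat_y_def)

interpretation SL: spin_relations SL2Z mat_x mat_y
proof -
  interpret group SL2Z by (rule group_SL2Z)
  show "spin_relations SL2Z mat_x mat_y"
    by unfold_locales (simp_all add: mat_x_def mat_y_def mdet_def mmul_def numeral_eq_Suc)
qed

lemma SL_z: "SL.z = (-1, 2, -1, 1)"
  unfolding SL.z_def by (simp add: mat_x_def mat_y_def mmul_def)

lemma SL_w: "SL.w = (-1, 0, 0, -1)"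
  unfolding SL.w_def SL_z by (simp add: mmul_def)

lemma mat_x_int_pow: "mat_x [^]\<^bsub>SL2Z\<^esub> (n::int) = (1, 2 * n, 0, 1)"
proof -
  have nat: "mat_x [^]\<^bsub>SL2Z\<^esub> (k::nat) = (1, 2 * int k, 0, 1)" for k
    by (induction k) (simp_all add: mat_x_def mmul_def algebra_simps)
  show ?thesis
  proof (cases "n < 0")
    case True
    then have "mat_x [^]\<^bsub>SL2Z\<^esub> n = inv\<^bsub>SL2Z\<^esub> (mat_x [^]\<^bsub>SL2Z\<^esub> nat (- n))"
      using SL.int_pow_neg_int[OF SL.a_closed, of "nat (- n)"] by simp
    then show ?thesis using True by (simp add: nat inv_SL2Z mdet_def minv_def)
  qed (simp add: nat flip: pow_nat)
qed

abbreviation nf_mat :: "nform \<Rightarrow> mat2" where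
  "nf_mat \<equiv> nform_eval SL2Z mat_x mat_y"

text \<open>For a nonzero column \<open>(A, C)\<close> these say where its slope \<open>A/C \<in> \<rat> \<union> {\<infinity>}\<close> lies:
  in the open interval \<open>(l, u)\<close>, resp.\ outside \<open>[0, 2]\<close>.\<close>

definition slope_between :: "int \<Rightarrow> int \<Rightarrow> int \<Rightarrow> int \<Rightarrow> bool" where
  "slope_between l u A C \<longleftrightarrow> l * (C * C) < A * C \<and> A * C < u * (C * C)"

definition slope_outside_0_2 :: "int \<Rightarrow> int \<Rightarrow> bool" where
  "slope_outside_0_2 A C \<longleftrightarrow> (C = 0 \<and> A \<noteq> 0) \<or> A * C < 0 \<or> 2 * (C * C) < A * C"

lemma slope_between_neg [simp]: "slope_between l u (- A) (- C) = slope_between l u A C"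
  by (simp add: slope_between_def)

lemma slope_between_nonzero: "slope_between l u A C \<Longrightarrow> C \<noteq> 0"
  by (auto simp: slope_between_def)

lemma slope_outside_0_2_mat_z:
  assumes "slope_outside_0_2 A C"
  shows "slope_between 0 2 (2 * C - A) (C - A)"
proof -
  have pos: "0 < (A - C) * (A - 2 * C) \<and> 0 < A * (A - C)"
  proof -
    consider "C = 0" "A \<noteq> 0" | "A * C < 0" | "2 * (C * C) < A * C"
      using assms slope_outside_0_2_def by blast
    then show ?thesis
    proof cases
      case 2
      then have "(A > 0 \<and> C < 0) \<or> (A < 0 \<and> C > 0)" by (simp add: mult_less_0_iff)
      then show ?thesis by (auto simp add: zero_less_mult_iff)
    next
      case 3
      then have "(C > 0 \<and> 2 * C < A) \<or> (C < 0 \<and> A < 2 * C)"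
        by (metis mult.assoc mult_less_cancel_right_neg mult_less_cancel_right_pos
            mult_zero_right not_less_iff_gr_or_eq)
      then show ?thesis by (auto simp add: zero_less_mult_iff)
    qed (auto simp add: zero_less_mult_iff linorder_neq_iff)
  qed
  have "(2 * C - A) * (C - A) = (A - C) * (A - 2 * C)"
    and "2 * ((C - A) * (C - A)) - (2 * C - A) * (C - A) = A * (A - C)"
    by algebra+
  then have "0 < (2 * C - A) * (C - A)" "0 < 2 * ((C - A) * (C - A)) - (2 * C - A) * (C - A)"
    using pos by simp_all
  then show ?thesis by (simp add: slope_between_def)
qed

lemma slope_between_shift:
  assumes "slope_between 0 2 A C"
  shows "slope_between (2 * n) (2 * n + 2) (A + 2 * n * C) C"
proof -
  have "(A + 2 * n * C) * C = A * C + 2 * n * (C * C)"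
    and "(2 * n + 2) * (C * C) = 2 * n * (C * C) + 2 * (C * C)"
    by algebra+
  then show ?thesis using assms by (simp add: slope_between_def)
qed

lemma slope_between_outside_0_2:
  assumes "slope_between (2 * n) (2 * n + 2) A C" "n \<noteq> 0"
  shows "slope_outside_0_2 A C"
proof -
  have "0 \<le> C * C" by simp
  consider "n \<ge> 1" | "n \<le> -1" using assms(2) by linarith
  then show ?thesis
  proof cases
    case 1
    then have "2 * (C * C) \<le> 2 * n * (C * C)" using \<open>0 \<le> C * C\<close> by (simp add: mult_right_mono)
    then show ?thesis using assms(1) unfolding slope_between_def slope_outside_0_2_def by linarith
  next
    case 2
    then have "(2 * n + 2) * (C * C) \<le> 0" using \<open>0 \<le> C * C\<close> by (simp add: mult_nonpos_nonneg)
    then show ?thesis using assms(1) unfolding slope_between_def slope_outside_0_2_def by linarith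
  qed
qed

lemma slope_between_unique:
  assumes "slope_between (2 * n) (2 * n + 2) A C" "slope_between (2 * m) (2 * m + 2) A C"
  shows "n = m"
proof -
  have pos: "C * C > 0"
    using slope_between_nonzero[OF assms(1)] by (auto simp add: zero_less_mult_iff linorder_neq_iff)
  have "2 * n * (C * C) < (2 * m + 2) * (C * C)" "2 * m * (C * C) < (2 * n + 2) * (C * C)"
    using assms unfolding slope_between_def by linarith+
  then have "2 * n < 2 * m + 2" "2 * m < 2 * n + 2"
    using pos mult_less_cancel_right_pos by blast+
  then show ?thesis by linarith
qed

text \<open>Ping-pong: \<open>z\<close> maps slopes outside \<open>[0, 2]\<close> into \<open>(0, 2)\<close>, and \<open>x\<^sup>n\<close> maps
  \<open>(0, 2)\<close> onto \<open>(2n, 2n + 2)\<close>, which lies outside \<open>[0, 2]\<close> again when \<open>n \<noteq> 0\<close>.\<close>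

lemma word_eval_slope:
  "reduced ns \<Longrightarrow> length ns \<ge> 2 \<Longrightarrow> word_eval SL2Z mat_x mat_y ns = (A, B, C, D) \<Longrightarrow>
     slope_between (2 * hd ns) (2 * hd ns + 2) A C"
proof (induction ns arbitrary: A B C D rule: reduced.induct)
  case (3 n m ns)
  obtain A0 B0 C0 D0 where m: "word_eval SL2Z mat_x mat_y (m # ns) = (A0, B0, C0, D0)"
    by (cases "word_eval SL2Z mat_x mat_y (m # ns)")
  have "slope_outside_0_2 A0 C0"
  proof (cases "ns = []")
    case True
    then show ?thesis using m by (simp add: mat_x_int_pow slope_outside_0_2_def)
  next
    case False
    then have "m \<noteq> 0" "reduced (m # ns)" "length (m # ns) \<ge> 2"
      using "3.prems"(1) by (auto simp: neq_Nil_conv)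
    then show ?thesis using "3.IH"[OF _ _ m] slope_between_outside_0_2 by simp
  qed
  moreover have "mmul (mmul (1, 2 * n, 0, 1) (-1, 2, -1, 1)) (A0, B0, C0, D0) = (A, B, C, D)"
    using "3.prems"(3) m by (simp add: mat_x_int_pow SL_z)
  then have "A = (2 * C0 - A0) + 2 * n * (C0 - A0)" "C = C0 - A0"
    by (auto simp: mmul_def algebra_simps)
  ultimately show ?case using slope_outside_0_2_mat_z slope_between_shift by simp
qed auto

lemma nf_mat_slope:
  assumes "reduced ns" "length ns \<ge> 2" "nf_mat (s, ns) = (A, B, C, D)"
  shows "slope_between (2 * hd ns) (2 * hd ns + 2) A C"
proof (cases s)
  case True
  then have "word_eval SL2Z mat_x mat_y ns = (- A, - B, - C, - D)"
    using assms(3) by (cases "word_eval SL2Z mat_x mat_y ns") (simp add: SL.nform_eval_eq SL_w mmul_def)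
  then show ?thesis using word_eval_slope[OF assms(1,2)] by fastforce
next
  case False
  then show ?thesis using assms word_eval_slope by (simp add: SL.nform_eval_eq)
qed

lemma nf_mat_single: "nf_mat (s, [n]) = (if s then (-1, -2 * n, 0, -1) else (1, 2 * n, 0, 1))"
  by (simp add: SL.nform_eval_eq SL_w mat_x_int_pow mmul_def)

lemma nf_mat_injective:
  "reduced ns \<Longrightarrow> reduced ns' \<Longrightarrow> nf_mat (s, ns) = nf_mat (s', ns') \<Longrightarrow> s = s' \<and> ns = ns'"
proof (induction ns arbitrary: s ns' s' rule: reduced.induct)
  case (2 n)
  obtain A B C D where E: "nf_mat (s', ns') = (A, B, C, D)" by (cases "nf_mat (s', ns')")
  then have "C = 0" using "2.prems"(3) by (auto simp: nf_mat_single split: if_splits)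
  then have "length ns' < 2"
    using nf_mat_slope[OF "2.prems"(2) _ E] slope_between_nonzero by fastforce
  then obtain n' where "ns' = [n']" using "2.prems"(2) by (cases ns' rule: reduced.cases) auto
  then show ?case using "2.prems"(3) by (auto simp: nf_mat_single split: if_splits)
next
  case (3 n m ns)
  obtain A B C D where E': "nf_mat (s', ns') = (A, B, C, D)" by (cases "nf_mat (s', ns')")
  have E: "nf_mat (s, n # m # ns) = (A, B, C, D)" using "3.prems"(3) E' by simp
  have "C \<noteq> 0" using nf_mat_slope[OF "3.prems"(1) _ E] slope_between_nonzero by simp
  then obtain n' m' ns'' where ns': "ns' = n' # m' # ns''"
    using "3.prems"(2) E' by (cases ns' rule: reduced.cases) (auto simp: nf_mat_single split: if_splits)
  have "n = n'"
    using nf_mat_slope[OF "3.prems"(1) _ E] nf_mat_slope[OF "3.prems"(2) _ E'] slope_between_unique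
    unfolding ns' by fastforce
  moreover have "mat_x [^]\<^bsub>SL2Z\<^esub> n \<otimes>\<^bsub>SL2Z\<^esub> SL.z \<in> Units SL2Z"
    using SL.Units_eq SL.m_closed SL.int_pow_closed SL.a_closed SL.z_closed by blast
  ultimately have "nf_mat (s, m # ns) = nf_mat (s', m' # ns'')"
    using "3.prems"(3) unfolding ns' SL.nform_eval_Cons_Cons by (metis SL.Units_l_cancel SL.nform_eval_closed)
  then have "s = s' \<and> m # ns = m' # ns''" using "3.IH" "3.prems"(1,2) unfolding ns' by auto
  then show ?case using \<open>n = n'\<close> ns' by simp
qed simp

lemma inj_on_nf_mat: "inj_on nf_mat normal_forms"
  using nf_mat_injective by (auto simp: inj_on_def normal_forms_def)

section \<open>The congruence subgroup \<open>\<Gamma>\<^sup>0(2)\<close>\<close>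

definition Gamma02 :: "mat2 set" where
  "Gamma02 = {m. mdet m = 1 \<and> even (fst (snd m))}"

lemma subgroup_Gamma02: "subgroup Gamma02 SL2Z"
proof (rule subgroup.intro)
  show "g \<otimes>\<^bsub>SL2Z\<^esub> h \<in> Gamma02" if "g \<in> Gamma02" "h \<in> Gamma02" for g h
  proof -
    have "mdet (mmul g h) = 1" using that by (simp add: Gamma02_def mdet_mmul)
    then show ?thesis using that by (cases g; cases h) (auto simp: Gamma02_def mmul_def)
  qed
  show "inv\<^bsub>SL2Z\<^esub> g \<in> Gamma02" if "g \<in> Gamma02" for g
    using that by (cases g) (auto simp: Gamma02_def inv_SL2Z minv_def mdet_def algebra_simps)
qed (auto simp: Gamma02_def mdet_def)

lemma det_one_even_imp_odd:
  fixes a b c d :: int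
  assumes "a * d - b * c = 1" "even b"
  shows "odd d"
proof
  assume "even d"
  then have "even (a * d - b * c)" using assms(2) by simp
  then show False using assms(1) by simp
qed

lemma mat_x_mat_y_in_Gamma02: "mat_x \<in> Gamma02" "mat_y \<in> Gamma02"
  by (simp_all add: Gamma02_def mat_x_def mat_y_def mdet_def)

lemma odd_shift_reduces:
  fixes c d :: int
  assumes "c \<noteq> 0" "odd d"
  shows "\<exists>k. \<bar>c + (d + 2 * k * c)\<bar> < \<bar>c\<bar>"
proof -
  define r where "r = d mod (2 * c)"
  have "r \<noteq> 0"
  proof
    assume "r = 0"
    then have "2 * c dvd d" by (simp add: r_def dvd_eq_mod_eq_0)
    then show False using assms(2) dvd_mult_left by blast
  qed
  have "c + (d + 2 * (- (d div (2 * c)) - 1) * c) = r - c"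
    using div_mult_mod_eq[of d "2 * c"] by (simp add: r_def algebra_simps)
  moreover have "\<bar>r - c\<bar> < \<bar>c\<bar>"
  proof (cases "c > 0")
    case True
    then have "0 \<le> r" "r < 2 * c" by (simp_all add: r_def)
    then show ?thesis using \<open>r \<noteq> 0\<close> True by linarith
  next
    case False
    then have "c < 0" using assms(1) by simp
    then have "r \<le> 0" "2 * c < r" by (simp_all add: r_def)
    then show ?thesis using \<open>r \<noteq> 0\<close> \<open>c < 0\<close> by linarith
  qed
  ultimately show ?thesis by metis
qed

lemma nf_mat_image_mult_z_pow_x:
  assumes "g \<in> nf_mat ` normal_forms"
  shows "mmul (mmul g SL.z) (mat_x [^]\<^bsub>SL2Z\<^esub> (k::int)) \<in> nf_mat ` normal_forms"
proof -
  obtain P where P: "P \<in> normal_forms" "nf_mat P = g" using assms by blast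
  have red: "reduced (snd (nf_times_z P))" using P(1) reduced_nf_times_z by (simp add: normal_forms_def)
  have ne: "snd P \<noteq> []" "snd (nf_times_z P) \<noteq> []" using red P(1) by (auto simp: normal_forms_def)
  have "nf_times_a k (nf_times_z P) \<in> normal_forms"
    using red by (simp add: normal_forms_def reduced_nf_times_a)
  moreover have "nf_mat (nf_times_a k (nf_times_z P)) = mmul (mmul g SL.z) (mat_x [^]\<^bsub>SL2Z\<^esub> k)"
    using SL.nform_eval_times_a[OF ne(2)] SL.nform_eval_times_z[OF ne(1)] P(2) by simp
  ultimately show ?thesis by (metis image_eqI)
qed

text \<open>Euclidean descent on the lower left entry: \<open>g' = g x\<^sup>k z\<inverse>\<close> has lower left entry
  \<open>c + d + 2kc\<close>, and \<open>g = g' z x\<^sup>-\<^sup>k\<close>.\<close>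

lemma Gamma02_in_nf_mat_image: "g \<in> Gamma02 \<Longrightarrow> g \<in> nf_mat ` normal_forms"
proof (induction "nat \<bar>fst (snd (snd g))\<bar>" arbitrary: g rule: less_induct)
  case less
  obtain a b c d where g: "g = (a, b, c, d)" by (cases g)
  obtain k0 where b: "b = 2 * k0" using less(2) g by (auto simp: Gamma02_def elim: evenE)
  have det: "a * d - b * c = 1" using less(2) g by (simp add: Gamma02_def mdet_def)
  show ?case
  proof (cases "c = 0")
    case True
    then have "(a = 1 \<and> d = 1) \<or> (a = -1 \<and> d = -1)" using det by (simp add: zmult_eq_1_iff)
    then have "nf_mat (False, [k0]) = g \<or> nf_mat (True, [- k0]) = g"
      using g b True by (auto simp: nf_mat_single)
    moreover have "(False, [k0]) \<in> normal_forms" "(True, [- k0]) \<in> normal_forms"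
      by (simp_all add: normal_forms_def)
    ultimately show ?thesis by blast
  next
    case False
    have "odd d" using det_one_even_imp_odd[OF det] b by simp
    then obtain k where k: "\<bar>c + (d + 2 * k * c)\<bar> < \<bar>c\<bar>" using odd_shift_reduces False by blast
    define g' where "g' = mmul (mmul g (1, 2 * k, 0, 1)) (1, -2, 1, -1)"
    have g': "g' = (a + (2 * k * a + b), -2 * a - (2 * k * a + b), c + (d + 2 * k * c), -2 * c - (d + 2 * k * c))"
      unfolding g'_def g by (simp add: mmul_def algebra_simps)
    have "mdet g' = 1"
      using less(2) unfolding g'_def by (simp add: Gamma02_def mdet_mmul) (simp add: mdet_def)
    then have "g' \<in> Gamma02" using b by (simp add: Gamma02_def g')
    moreover have "nat \<bar>fst (snd (snd g'))\<bar> < nat \<bar>fst (snd (snd g))\<bar>" using k g g' by simp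
    ultimately have "g' \<in> nf_mat ` normal_forms" using less(1) by blast
    then have "mmul (mmul g' SL.z) (mat_x [^]\<^bsub>SL2Z\<^esub> (- k)) \<in> nf_mat ` normal_forms"
      by (rule nf_mat_image_mult_z_pow_x)
    moreover have "mmul (mmul g' SL.z) (mat_x [^]\<^bsub>SL2Z\<^esub> (- k)) = g"
      by (simp add: g' g SL_z mat_x_int_pow mmul_def algebra_simps)
    ultimately show ?thesis by simp
  qed
qed

lemma Gamma02_eq_generate: "Gamma02 = generate SL2Z {mat_x, mat_y}"
  and nf_mat_image: "nf_mat ` normal_forms = Gamma02"
proof -
  have image: "Gamma02 \<subseteq> nf_mat ` normal_forms"
    using Gamma02_in_nf_mat_image by (rule subsetI)
  have eval: "nf_mat ` normal_forms \<subseteq> generate SL2Z {mat_x, mat_y}"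
    by (rule image_subsetI) (rule SL.nform_eval_in_generate)
  have gen: "generate SL2Z {mat_x, mat_y} \<subseteq> Gamma02"
    by (rule group.generate_subgroup_incl[OF group_SL2Z _ subgroup_Gamma02])
      (simp add: mat_x_mat_y_in_Gamma02)
  show "Gamma02 = generate SL2Z {mat_x, mat_y}"
    by (rule subset_antisym[OF order_trans[OF image eval] gen])
  show "nf_mat ` normal_forms = Gamma02"
    by (rule subset_antisym[OF order_trans[OF eval gen] image])
qed

definition nform_of :: "mat2 \<Rightarrow> nform" where
  "nform_of = the_inv_into normal_forms nf_mat"

lemma nform_of_in_normal_forms: "g \<in> Gamma02 \<Longrightarrow> nform_of g \<in> normal_forms"
  unfolding nform_of_def using the_inv_into_into[OF inj_on_nf_mat] nf_mat_image by blast

lemma nf_mat_nform_of: "g \<in> Gamma02 \<Longrightarrow> nf_mat (nform_of g) = g"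
  unfolding nform_of_def using f_the_inv_into_f[OF inj_on_nf_mat] nf_mat_image by blast

lemma nform_of_nf_mat: "P \<in> normal_forms \<Longrightarrow> nform_of (nf_mat P) = P"
  unfolding nform_of_def by (rule the_inv_into_f_f[OF inj_on_nf_mat])

lemma nform_of_mat_x: "nform_of mat_x = (False, [1])"
proof -
  have "nf_mat (False, [1]) = mat_x"
    by (simp add: nf_mat_single) (simp add: mat_x_def)
  then show ?thesis using nform_of_nf_mat[of "(False, [1])"] by (simp add: normal_forms_def)
qed

lemma nform_of_mat_y: "nform_of mat_y = (False, [-1, 0])"
proof -
  have "nf_mat (False, [-1, 0]) = mat_y"
    by (simp add: SL.nform_eval_eq mat_x_int_pow SL_z mmul_def) (simp add: mat_y_def)
  then show ?thesis using nform_of_nf_mat[of "(False, [-1, 0])"] by (simp add: normal_forms_def)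
qed

lemma (in spin_relations) nform_eval_nform_of_hom:
  "(\<lambda>g. nform_eval G a b (nform_of g)) \<in> hom (SL2Z\<lparr>carrier := Gamma02\<rparr>) G"
proof (rule homI)
  fix g h assume "g \<in> carrier (SL2Z\<lparr>carrier := Gamma02\<rparr>)" "h \<in> carrier (SL2Z\<lparr>carrier := Gamma02\<rparr>)"
  then have P: "nform_of g \<in> normal_forms" "nf_mat (nform_of g) = g"
    and "nform_of h \<in> normal_forms" "nf_mat (nform_of h) = h"
    by (simp_all add: nform_of_in_normal_forms nf_mat_nform_of)
  then have "nf_mat (nf_times (nform_of g) (nform_of h)) = g \<otimes>\<^bsub>SL2Z\<^esub> h"
    by (simp add: SL.nform_eval_times)
  then have "nform_of (g \<otimes>\<^bsub>SL2Z\<^esub> h) = nform_of (nf_mat (nf_times (nform_of g) (nform_of h)))"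
    by simp
  also have "\<dots> = nf_times (nform_of g) (nform_of h)"
    by (rule nform_of_nf_mat[OF nf_times_closed[OF P(1)]])
  finally show "nform_eval G a b (nform_of (g \<otimes>\<^bsub>SL2Z\<lparr>carrier := Gamma02\<rparr>\<^esub> h)) =
      nform_eval G a b (nform_of g) \<otimes> nform_eval G a b (nform_of h)"
    using nform_eval_times[OF P(1), of "nform_of h"] by simp
qed simp

lemma (in spin_relations) nform_eval_nform_of_generators:
  "nform_eval G a b (nform_of mat_x) = a" "nform_eval G a b (nform_of mat_y) = b"
proof -
  show "nform_eval G a b (nform_of mat_x) = a"
    by (simp add: nform_of_mat_x nform_eval_eq)
  have "nform_eval G a b (nform_of mat_y) = inv a \<otimes> (a \<otimes> b)"
    by (simp add: nform_of_mat_y nform_eval_eq z_def int_pow_neg[of a 1, simplified])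
  also have "\<dots> = b" by (simp add: m_assoc[symmetric])
  finally show "nform_eval G a b (nform_of mat_y) = b" .
qed

lemma Gamma02_hom_eqI:
  assumes "group H" "f \<in> hom (SL2Z\<lparr>carrier := Gamma02\<rparr>) H" "f' \<in> hom (SL2Z\<lparr>carrier := Gamma02\<rparr>) H"
    and "f mat_x = f' mat_x" "f mat_y = f' mat_y" "g \<in> Gamma02"
  shows "f g = f' g"
proof -
  have gens: "{mat_x, mat_y} \<subseteq> Gamma02" using mat_x_mat_y_in_Gamma02 by simp
  have "g \<in> generate (SL2Z\<lparr>carrier := Gamma02\<rparr>) {mat_x, mat_y}"
    using group.generate_consistent[OF group_SL2Z gens subgroup_Gamma02] Gamma02_eq_generate assms(6)
    by simp
  then show ?thesis
  proof (rule hom_eq_on_generate[OF subgroup.subgroup_is_group[OF subgroup_Gamma02 group_SL2Z] assms(1-3), rotated 2])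
    show "{mat_x, mat_y} \<subseteq> carrier (SL2Z\<lparr>carrier := Gamma02\<rparr>)" using gens by simp
    show "f s = f' s" if "s \<in> {mat_x, mat_y}" for s using that assms(4,5) by auto
  qed
qed

lemma (in spin_relations) Gamma02_universal:
  "\<exists>\<psi> \<in> hom (SL2Z\<lparr>carrier := Gamma02\<rparr>) G. \<psi> mat_x = a \<and> \<psi> mat_y = b
     \<and> (\<forall>\<psi>' \<in> hom (SL2Z\<lparr>carrier := Gamma02\<rparr>) G. \<psi>' mat_x = a \<longrightarrow> \<psi>' mat_y = b
          \<longrightarrow> (\<forall>g \<in> Gamma02. \<psi>' g = \<psi> g))"
proof -
  define \<psi> where "\<psi> = (\<lambda>g. nform_eval G a b (nform_of g))"
  have hom: "\<psi> \<in> hom (SL2Z\<lparr>carrier := Gamma02\<rparr>) G" "\<psi> mat_x = a" "\<psi> mat_y = b"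
    unfolding \<psi>_def using nform_eval_nform_of_hom nform_eval_nform_of_generators by simp_all
  moreover have "\<psi>' g = \<psi> g"
    if "\<psi>' \<in> hom (SL2Z\<lparr>carrier := Gamma02\<rparr>) G" "\<psi>' mat_x = a" "\<psi>' mat_y = b" "g \<in> Gamma02"
    for \<psi>' g
    using Gamma02_hom_eqI[OF is_group that(1) hom(1)] that hom by simp
  ultimately show ?thesis by blast
qed

section \<open>Spin structures on the torus\<close>

lemma primitive_induct [consumes 1, case_names alpha alpha_neg beta beta_neg twist_alpha twist_beta]:
  assumes "primitive v"
    and "P (1, 0)" "P (-1, 0)" "P (0, 1)" "P (0, -1)"
    and twist_alpha: "\<And>p q. primitive (p, q) \<Longrightarrow> P (p + q, q) \<longleftrightarrow> P (p, q)"
    and twist_beta: "\<And>p q. primitive (p, q) \<Longrightarrow> P (p, q - p) \<longleftrightarrow> P (p, q)"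
  shows "P v"
proof -
  obtain p q where v: "v = (p, q)" by (cases v)
  have "P (p, q)" if "primitive (p, q)" for p q
    using that
  proof (induction "nat (\<bar>p\<bar> + \<bar>q\<bar>)" arbitrary: p q rule: less_induct)
    case less
    have gcd: "gcd p q = 1" using less.prems by (simp add: primitive_def)
    consider "q = 0" | "p = 0" | "\<bar>p - q\<bar> < \<bar>p\<bar>" | "\<bar>p + q\<bar> < \<bar>p\<bar>" | "\<bar>q - p\<bar> < \<bar>q\<bar>" | "\<bar>q + p\<bar> < \<bar>q\<bar>"
      by arith
    then show ?case
    proof cases
      case 1
      then have "p = 1 \<or> p = -1" using gcd by auto
      then show ?thesis using 1 assms(2,3) by auto
    next
      case 2
      then have "q = 1 \<or> q = -1" using gcd by auto
      then show ?thesis using 2 assms(4,5) by auto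
    next
      case 3
      have "primitive (p - q, q)" using gcd by (simp add: primitive_def gcd_diff1)
      then show ?thesis using less.hyps[of "p - q" q] 3 twist_alpha[of "p - q" q] by simp
    next
      case 4
      have "primitive (p + q, q)" using gcd by (simp add: primitive_def)
      then show ?thesis using less.hyps[of "p + q" q] 4 twist_alpha[OF less.prems] by simp
    next
      case 5
      have "primitive (p, q - p)" using gcd by (simp add: primitive_def) (metis gcd.commute gcd_diff1)
      then show ?thesis using less.hyps[of p "q - p"] 5 twist_beta[OF less.prems] by simp
    next
      case 6
      have "primitive (p, q + p)" using gcd by (simp add: primitive_def) (metis add.commute gcd_add2)
      then show ?thesis using less.hyps[of p "q + p"] 6 twist_beta[of p "q + p"] by simp
    qed
  qed
  then show ?thesis using assms(1) v by simp
qed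

lemma spin2_value:
  assumes spin: "spin2 \<phi>" and "\<phi> (1, 0) = 1" "\<phi> (0, 1) = 0" "primitive v"
  shows "\<phi> v = fst v mod 2"
proof -
  have twist: "\<phi> (twist_vec c d) mod 2 = (\<phi> d + ipair d c * \<phi> c) mod 2"
    if "primitive c" "primitive d" for c d
    using spin that unfolding spin2_def by blast
  have reverse: "(\<phi> c + \<phi> (- fst c, - snd c)) mod 2 = 0" if "primitive c" for c
    using spin that unfolding spin2_def by blast
  have prim: "primitive (1, 0)" "primitive (0, 1)" by (simp_all add: primitive_def)
  have "\<phi> v mod 2 = fst v mod 2"
    using assms(4)
  proof (induction rule: primitive_induct)
    case alpha_neg
    then show ?case using reverse[OF prim(1)] assms(2) by simp presburger
  next
    case beta_neg
    then show ?case using reverse[OF prim(2)] assms(3) by simp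
  next
    case (twist_alpha p q)
    then show ?case using twist[OF prim(1) twist_alpha] assms(2)
      by (simp add: twist_vec_def ipair_def) presburger
  next
    case (twist_beta p q)
    then show ?case using twist[OF prim(2) twist_beta] assms(3)
      by (simp add: twist_vec_def ipair_def)
  qed (use assms(2,3) in simp_all)
  moreover have "\<phi> v \<in> {0, 1}" using spin assms(4) unfolding spin2_def by blast
  ultimately show ?thesis by auto
qed

lemma primitive_mapply:
  assumes "mdet f = 1" "primitive v"
  shows "primitive (mapply f v)"
proof -
  obtain a b c d where f: "f = (a, b, c, d)" by (cases f)
  obtain x y where v: "v = (x, y)" by (cases v)
  define u1 u2 where "u1 = a * x + b * y" and "u2 = c * x + d * y"
  have det: "a * d - b * c = 1" using assms(1) f by (simp add: mdet_def)
  have "d * u1 - b * u2 = (a * d - b * c) * x" "a * u2 - c * u1 = (a * d - b * c) * y"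
    unfolding u1_def u2_def by algebra+
  then have "gcd u1 u2 dvd x" "gcd u1 u2 dvd y"
    unfolding det by (metis mult_1 dvd_diff dvd_mult gcd_dvd1 gcd_dvd2)+
  then have "gcd u1 u2 dvd gcd x y" by (rule gcd_greatest)
  moreover have "gcd x y = 1" using assms(2) v by (simp add: primitive_def)
  ultimately have "gcd u1 u2 dvd 1" by metis
  then have "gcd u1 u2 = 1" using zdvd1_eq[of "gcd u1 u2"] by simp
  then show ?thesis by (simp add: f v mapply_def primitive_def u1_def u2_def)
qed

lemma spin_stab_eq_Gamma02:
  assumes "spin2 \<phi>" "\<phi> (1, 0) = 1" "\<phi> (0, 1) = 0"
  shows "spin_stab \<phi> = Gamma02"
proof (rule Set.set_eqI)
  fix f :: mat2
  obtain a b c d where f: "f = (a, b, c, d)" by (cases f)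
  have mapply: "mapply (minv f) (x, y) = (d * x - b * y, - c * x + a * y)" for x y
    by (simp add: f mapply_def minv_def)
  have "f \<in> spin_stab \<phi> \<longleftrightarrow>
      mdet f = 1 \<and> (\<forall>x y. primitive (x, y) \<longrightarrow> (d * x - b * y) mod 2 = x mod 2)"
    using spin2_value[OF assms] primitive_mapply[of "minv f"] mdet_minv[of f]
    by (auto simp: spin_stab_def mapply)
  also have "\<dots> \<longleftrightarrow> mdet f = 1 \<and> even b"
  proof (intro conj_cong refl iffI allI impI)
    assume "\<forall>x y. primitive (x, y) \<longrightarrow> (d * x - b * y) mod 2 = x mod 2"
    from this[rule_format, of 0 1] have "(d * 0 - b * 1) mod 2 = 0 mod 2"
      by (simp add: primitive_def)
    then show "even b" by presburger
  next
    fix x y assume "mdet f = 1" "even b"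
    then have "odd d" using f det_one_even_imp_odd[of a d b c] by (simp add: mdet_def)
    then have "2 dvd ((d - 1) * x - b * y)" using \<open>even b\<close> by simp
    then show "(d * x - b * y) mod 2 = x mod 2" by (simp add: mod_eq_dvd_iff algebra_simps)
  qed
  finally show "f \<in> spin_stab \<phi> \<longleftrightarrow> f \<in> Gamma02" by (simp add: Gamma02_def f)
qed

theorem mainTheorem10:
  fixes \<phi> :: "vec2 \<Rightarrow> int"
  assumes "spin2 \<phi>" and "\<phi> (1,0) = 1" and "\<phi> (0,1) = 0"
  defines "G \<equiv> StabGroup \<phi>"
      and "x \<equiv> mmul t_alpha t_alpha"
      and "y \<equiv> t_beta"
  shows "spin_stab \<phi> = generate SL2Z {x, y}
    \<and> x \<in> carrier G \<and> y \<in> carrier G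
    \<and> (x \<otimes>\<^bsub>G\<^esub> y) [^]\<^bsub>G\<^esub> (2::nat) = (y \<otimes>\<^bsub>G\<^esub> x) [^]\<^bsub>G\<^esub> (2::nat)
    \<and> (x \<otimes>\<^bsub>G\<^esub> y) [^]\<^bsub>G\<^esub> (4::nat) = \<one>\<^bsub>G\<^esub>
    \<and> (\<forall>(H :: 'h monoid) h1 h2. group H \<longrightarrow> h1 \<in> carrier H \<longrightarrow> h2 \<in> carrier H
         \<longrightarrow> (h1 \<otimes>\<^bsub>H\<^esub> h2) [^]\<^bsub>H\<^esub> (2::nat) = (h2 \<otimes>\<^bsub>H\<^esub> h1) [^]\<^bsub>H\<^esub> (2::nat)
         \<longrightarrow> (h1 \<otimes>\<^bsub>H\<^esub> h2) [^]\<^bsub>H\<^esub> (4::nat) = \<one>\<^bsub>H\<^esub>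
         \<longrightarrow> (\<exists>\<psi> \<in> hom G H. \<psi> x = h1 \<and> \<psi> y = h2
               \<and> (\<forall>\<psi>' \<in> hom G H. \<psi>' x = h1 \<longrightarrow> \<psi>' y = h2
                     \<longrightarrow> (\<forall>g \<in> carrier G. \<psi>' g = \<psi> g))))"
proof -
  have stab: "spin_stab \<phi> = Gamma02" by (rule spin_stab_eq_Gamma02[OF assms(1-3)])
  have G: "G = SL2Z\<lparr>carrier := Gamma02\<rparr>" by (simp add: G_def StabGroup_def stab)
  have x: "x = mat_x" and y: "y = mat_y" by (simp_all add: x_def y_def t_alpha_sq_eq t_beta_eq)
  have generated: "spin_stab \<phi> = generate SL2Z {x, y}"
    by (simp add: stab x y Gamma02_eq_generate)
  have in_carrier: "x \<in> carrier G" "y \<in> carrier G"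
    using mat_x_mat_y_in_Gamma02 by (simp_all add: G x y)
  have relations: "(x \<otimes>\<^bsub>G\<^esub> y) [^]\<^bsub>G\<^esub> (2::nat) = (y \<otimes>\<^bsub>G\<^esub> x) [^]\<^bsub>G\<^esub> (2::nat)"
    "(x \<otimes>\<^bsub>G\<^esub> y) [^]\<^bsub>G\<^esub> (4::nat) = \<one>\<^bsub>G\<^esub>"
    by (simp_all add: G x y numeral_eq_Suc mat_x_def mat_y_def mmul_def)
  have universal: "\<exists>\<psi> \<in> hom G H. \<psi> x = h1 \<and> \<psi> y = h2
      \<and> (\<forall>\<psi>' \<in> hom G H. \<psi>' x = h1 \<longrightarrow> \<psi>' y = h2 \<longrightarrow> (\<forall>g \<in> carrier G. \<psi>' g = \<psi> g))"
    if "group H" "h1 \<in> carrier H" "h2 \<in> carrier H"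
      "(h1 \<otimes>\<^bsub>H\<^esub> h2) [^]\<^bsub>H\<^esub> (2::nat) = (h2 \<otimes>\<^bsub>H\<^esub> h1) [^]\<^bsub>H\<^esub> (2::nat)"
      "(h1 \<otimes>\<^bsub>H\<^esub> h2) [^]\<^bsub>H\<^esub> (4::nat) = \<one>\<^bsub>H\<^esub>"
    for H :: "'h monoid" and h1 h2
  proof -
    interpret H: spin_relations H h1 h2
      using that by (simp add: spin_relations_def spin_relations_axioms_def)
    show ?thesis using H.Gamma02_universal by (simp add: G x y)
  qed
  show ?thesis
    using generated in_carrier relations universal by blast
qed

end
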